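(* If $K\in L^2(X\times X,\mu\times\mu)$ is $L^2(X,\mu)$-positive definite, then so is $E_n(K)$, for every $n\ge1$.
   Context: Standing setting: $X$ is a Hausdorff, locally compact, second countable topological space and $\mu$ is a non-degenerate, $\sigma$-finite, locally finite Borel measure on $X$. Fix an open cover of $X$ by open sets, each the interior of a compact set and of finite $\mu$-measure, and extract a countable subcover $\{\mathcal{A}_k\}_{k\ge 0}$. Let $\mathcal{P}_0$ be the partition of $X$ consisting of $\mathcal{A}_k\setminus\overline{\mathcal{A}_0\cup\dots\cup\mathcal{A}_{k-1}}$ and $\partial\mathcal{A}_k\setminus\overline{\mathcal{A}_0\cup\dots\cup\mathcal{A}_{k-1}}$, $k\ge0$. Fix a countable base $\{\mathcal{U}_n\}_{n\ge0}$ and set $\mathcal{P}_{n+1}=\{\mathcal{U}_n\cap A\}\cup\{(X\setminus\overline{\mathcal{U}_n})\cap A\}\cup\{\partial\mathcal{U}_n\cap A\}$, $A\in\mathcal{P}_n$. $O_n(x)$ is the unique element of $\mathcal{P}_n$ containing $x$; $\mathfrak{N}=\{x:\mu(O_m(x))=0\text{ for some }m\}$. For $u,v\in X\setminus\mathfrak{N}$, $E_n(K)(u,v)=\frac{1}{\mu(O_n(u))\mu(O_n(v))}\int_{O_n(u)}\int_{O_n(v)}K(x,y)\,d\mu(y)\,d\mu(x)$. A kernel $H\in L^2(X\times X,\mu\times\mu)$ is $L^2(X,\mu)$-positive definite if its integral operator $\mathcal{H}(f)=\int_X H(\cdot,y)f(y)\,d\mu(y)$ satisfies $\langle\mathcal{H}f,f\rangle\ge0$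 for all $f\in L^2(X,\mu)$. *)

theory Defs
  imports "HOL-Analysis.Analysis"
begin

definition P0 :: "(nat \<Rightarrow> 'a::topological_space set) \<Rightarrow> 'a set set" where
  "P0 A = (\<Union>k. {A k - closure (\<Union>j<k. A j), frontier (A k) - closure (\<Union>j<k. A j)})"

fun Part :: "(nat \<Rightarrow> 'a::topological_space set) \<Rightarrow> (nat \<Rightarrow> 'a set) \<Rightarrow> nat \<Rightarrow> 'a set set" where
  "Part A U 0 = P0 A"
| "Part A U (Suc n) =
     (\<Union>B\<in>Part A U n. {U n \<inter> B, (UNIV - closure (U n)) \<inter> B, frontier (U n) \<inter> B})"

definition Cell :: "(nat \<Rightarrow> 'a::topological_space set) \<Rightarrow> (nat \<Rightarrow> 'a set) \<Rightarrow> nat \<Rightarrow> 'a \<Rightarrow> 'a set" where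
  "Cell A U n x = (THE B. B \<in> Part A U n \<and> x \<in> B)"

definition Nset :: "'a::topological_space measure \<Rightarrow> (nat \<Rightarrow> 'a set) \<Rightarrow> (nat \<Rightarrow> 'a set) \<Rightarrow> 'a set" where
  "Nset M A U = {x. \<exists>m. emeasure M (Cell A U m x) = 0}"

text \<open>E_n(K); on (the null set) N it is set to 0 by convention.\<close>
definition En :: "'a::topological_space measure \<Rightarrow> (nat \<Rightarrow> 'a set) \<Rightarrow> (nat \<Rightarrow> 'a set) \<Rightarrow> nat
    \<Rightarrow> ('a \<Rightarrow> 'a \<Rightarrow> real) \<Rightarrow> 'a \<Rightarrow> 'a \<Rightarrow> real" where
  "En M A U n K u v =
     (if u \<in> Nset M A U \<or> v \<in> Nset M A U then 0
      else (1 / (measure M (Cell A U n u) * measure M (Cell A U n v))) *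
           (\<integral>x\<in>Cell A U n u. (\<integral>y\<in>Cell A U n v. K x y \<partial>M) \<partial>M))"

definition L2 :: "'b measure \<Rightarrow> ('b \<Rightarrow> real) \<Rightarrow> bool" where
  "L2 M f \<longleftrightarrow> f \<in> borel_measurable M \<and> integrable M (\<lambda>x. (f x)\<^sup>2)"

definition L2_pos_def :: "'b measure \<Rightarrow> ('b \<Rightarrow> 'b \<Rightarrow> real) \<Rightarrow> bool" where
  "L2_pos_def M H \<longleftrightarrow> L2 (M \<Otimes>\<^sub>M M) (\<lambda>(x, y). H x y) \<and>
     (\<forall>f. L2 M f \<longrightarrow> 0 \<le> (\<integral>x. (\<integral>y. H x y * f y \<partial>M) * f x \<partial>M))"

end

theory Submission
  imports Defs
begin

text \<open>
  The cells of P_n form a countable partition of X into Borel sets of finite measure, and off the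
  null set (N \<times> X) \<union> (X \<times> N) the kernel E_n(K) is the average of K over the product cell
  O_n(u) \<times> O_n(v). Averaging over a partition is self-adjoint on L^2 and maps f \<otimes> f to
  (avg f) \<otimes> (avg f), so the quadratic form of E_n(K) at f equals that of K at avg f, which is
  nonnegative.
\<close>

section \<open>Square integrable functions\<close>

lemma integrable_mult_L2:
  assumes "L2 M f" "L2 M g"
  shows "integrable M (\<lambda>x. f x * g x)"
proof (rule Bochner_Integration.integrable_bound)
  show "integrable M (\<lambda>x. (f x)\<^sup>2 + (g x)\<^sup>2)"
    using assms by (auto simp: L2_def)
  have "\<bar>a * b\<bar> \<le> a\<^sup>2 + b\<^sup>2" for a b :: real
  proof -
    have "2 * (\<bar>a\<bar> * \<bar>b\<bar>) \<le> a\<^sup>2 + b\<^sup>2"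
      using sum_squares_bound[of "\<bar>a\<bar>" "\<bar>b\<bar>"] by (simp add: mult.assoc)
    moreover have "0 \<le> \<bar>a\<bar> * \<bar>b\<bar>"
      by simp
    ultimately show ?thesis
      unfolding abs_mult by linarith
  qed
  then show "AE x in M. norm (f x * g x) \<le> norm ((f x)\<^sup>2 + (g x)\<^sup>2)"
    by simp
qed (use assms in \<open>auto simp: L2_def\<close>)

lemma L2_indicator:
  assumes "B \<in> sets M" "emeasure M B < \<infinity>"
  shows "L2 M (indicator B)"
proof -
  have "(\<lambda>x. (indicator B x :: real)\<^sup>2) = indicator B"
    by (auto simp: indicator_def)
  then show ?thesis
    using assms by (auto simp: L2_def integrable_indicator_iff)
qed

lemma integrable_indicator_mult_L2:
  assumes "B \<in> sets M" "emeasure M B < \<infinity>" "L2 M h"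
  shows "integrable M (\<lambda>x. indicator B x * h x)"
  using integrable_mult_L2[OF L2_indicator[OF assms(1,2)] assms(3)] .

lemma set_integral_square_div_measure_le:
  assumes B: "B \<in> sets M" "emeasure M B < \<infinity>" and h: "L2 M h"
  shows "(\<integral>x\<in>B. h x \<partial>M)\<^sup>2 / measure M B \<le> (\<integral>x\<in>B. (h x)\<^sup>2 \<partial>M)"
proof -
  define I where "I = (\<integral>x\<in>B. h x \<partial>M)"
  define J where "J = (\<integral>x\<in>B. (h x)\<^sup>2 \<partial>M)"
  define m where "m = measure M B"
  have "0 \<le> J"
    unfolding J_def set_lebesgue_integral_def by (auto intro!: integral_nonneg simp: indicator_def)
  moreover have "I\<^sup>2 / m \<le> J" if "m > 0"
  proof -
    define c where "c = I / m"
    have "integrable M (\<lambda>x. indicator B x * (h x)\<^sup>2)"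
      using integrable_mult_indicator[OF B(1), of "\<lambda>x. (h x)\<^sup>2"] h by (auto simp: L2_def)
    moreover have "integrable M (\<lambda>x. indicator B x :: real)"
      using B by (auto simp: integrable_indicator_iff)
    moreover have "(\<lambda>x. indicator B x * (h x - c)\<^sup>2)
        = (\<lambda>x. indicator B x * (h x)\<^sup>2 - (2 * c) * (indicator B x * h x) + c\<^sup>2 * indicator B x)"
      by (auto simp: power2_eq_square algebra_simps)
    ultimately have "(\<integral>x. indicator B x * (h x - c)\<^sup>2 \<partial>M) = J - (2 * c) * I + c\<^sup>2 * m"
      using integrable_indicator_mult_L2[OF B h] B
      by (simp add: I_def J_def m_def set_lebesgue_integral_def)
    moreover have "0 \<le> (\<integral>x. indicator B x * (h x - c)\<^sup>2 \<partial>M)"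
      by (auto intro!: integral_nonneg simp: indicator_def)
    moreover have "c * I = I\<^sup>2 / m" "c\<^sup>2 * m = I\<^sup>2 / m"
      using that by (simp_all add: c_def power2_eq_square)
    ultimately show ?thesis
      by linarith
  qed
  ultimately show ?thesis
    using measure_nonneg[of M B] unfolding I_def J_def m_def
    by (cases "measure M B = 0") auto
qed

lemma integral_eq_suminf_disjoint_family:
  fixes g :: "'b \<Rightarrow> real" and E :: "nat \<Rightarrow> 'b set"
  assumes g: "integrable M g" and UN: "(\<Union>i. E i) = UNIV"
    and sets: "\<And>i. E i \<in> sets M" and disj: "disjoint_family E"
  shows "(\<integral>x. g x \<partial>M) = (\<Sum>i. \<integral>x\<in>E i. g x \<partial>M)"
proof -
  have "(\<integral>x. g x \<partial>M) = (\<integral>x\<in>(\<Union>i. E i). g x \<partial>M)"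
    by (simp add: UN set_lebesgue_integral_def)
  also have "\<dots> = (\<Sum>i. \<integral>x\<in>E i. g x \<partial>M)"
  proof (rule lebesgue_integral_countable_add)
    show "E i \<inter> E j = {}" if "i \<noteq> j" for i j
      using disj that by (simp add: disjoint_family_on_def)
    show "set_integrable M (\<Union>i. E i) g"
      using g by (simp add: UN set_integrable_def)
  qed (fact sets)
  finally show ?thesis .
qed

section \<open>Averaging over a countable partition\<close>

definition cell_avg :: "'b measure \<Rightarrow> ('b \<Rightarrow> 'b set) \<Rightarrow> ('b \<Rightarrow> real) \<Rightarrow> 'b \<Rightarrow> real" where
  "cell_avg M cell h x = (\<integral>y\<in>cell x. h y \<partial>M) / measure M (cell x)"

locale countable_partition =
  fixes M :: "'b measure" and P :: "'b set set" and cell :: "'b \<Rightarrow> 'b set"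
  assumes space_eq: "space M = UNIV"
    and countable_P: "countable P"
    and sets_P: "\<And>B. B \<in> P \<Longrightarrow> B \<in> sets M"
    and finite_P: "\<And>B. B \<in> P \<Longrightarrow> emeasure M B < \<infinity>"
    and cell_in_P: "\<And>x. cell x \<in> P"
    and mem_cell: "\<And>x. x \<in> cell x"
    and cell_unique: "\<And>B x. B \<in> P \<Longrightarrow> x \<in> B \<Longrightarrow> cell x = B"
begin

lemma P_not_empty: "P \<noteq> {}"
  using cell_in_P by blast

lemma cell_eq: "x \<in> cell y \<Longrightarrow> cell x = cell y"
  using cell_unique cell_in_P by blast

lemma borel_measurable_cell_constant:
  fixes F :: "'b \<Rightarrow> real"
  assumes "\<And>x y. y \<in> cell x \<Longrightarrow> F y = F x"
  shows "F \<in> borel_measurable M"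
proof (rule borel_measurableI)
  fix S :: "real set"
  have "F -` S \<inter> space M = \<Union>{B\<in>P. \<exists>x\<in>B. F x \<in> S}"
  proof (intro equalityI subsetI)
    fix x assume "x \<in> F -` S \<inter> space M"
    then show "x \<in> \<Union>{B\<in>P. \<exists>x\<in>B. F x \<in> S}"
      using cell_in_P mem_cell by blast
  next
    fix y assume "y \<in> \<Union>{B\<in>P. \<exists>x\<in>B. F x \<in> S}"
    then obtain B x where "B \<in> P" "y \<in> B" "x \<in> B" "F x \<in> S"
      by blast
    then have "F y = F x"
      using assms cell_unique mem_cell by metis
    then show "y \<in> F -` S \<inter> space M"
      using \<open>F x \<in> S\<close> space_eq by simp
  qed
  also have "\<dots> \<in> sets M"
    using sets_P countable_subset[OF _ countable_P] by (intro sets.countable_Union) auto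
  finally show "F -` S \<inter> space M \<in> sets M" .
qed

lemma borel_measurable_cell_avg: "cell_avg M cell h \<in> borel_measurable M"
  by (rule borel_measurable_cell_constant) (simp add: cell_avg_def cell_eq)

text \<open>
  Enumerating P through disjointed sets gives a disjoint sequence listing every cell exactly once,
  padded with empty sets.
\<close>

abbreviation enum_cells :: "nat \<Rightarrow> 'b set" where
  "enum_cells \<equiv> disjointed (from_nat_into P)"

lemma enum_cells_eq_cell:
  assumes x: "x \<in> enum_cells i"
  shows "enum_cells i = cell x"
proof -
  let ?D = "from_nat_into P"
  have D_in_P: "?D j \<in> P" for j
    using from_nat_into[OF P_not_empty] .
  have x_in: "x \<in> ?D i" and x_notin: "\<And>j. j < i \<Longrightarrow> x \<notin> ?D j"
    using x by (auto simp: disjointed_def)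
  have cell_x: "cell x = ?D i"
    using cell_unique[OF D_in_P x_in] .
  have "y \<notin> ?D j" if "y \<in> cell x" "j < i" for y j
  proof
    assume "y \<in> ?D j"
    then have "cell x = ?D j"
      using cell_unique[OF D_in_P] cell_eq[OF that(1)] by metis
    then show False
      using mem_cell[of x] x_notin[OF that(2)] by simp
  qed
  then show ?thesis
    unfolding disjointed_def using cell_x by auto
qed

lemma sets_enum_cells: "enum_cells i \<in> sets M"
proof -
  have "range (from_nat_into P) \<subseteq> sets M"
    using sets_P from_nat_into[OF P_not_empty] by blast
  from sets.range_disjointed_sets[OF this] show ?thesis
    by blast
qed

lemma finite_enum_cells: "emeasure M (enum_cells i) < \<infinity>"
proof -
  have "emeasure M (enum_cells i) \<le> emeasure M (from_nat_into P i)"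
    using sets_P from_nat_into[OF P_not_empty] disjointed_subset[of "from_nat_into P" i]
    by (intro emeasure_mono) auto
  also have "\<dots> < \<infinity>"
    using finite_P[OF from_nat_into[OF P_not_empty]] .
  finally show ?thesis .
qed

lemma UN_enum_cells: "(\<Union>i. enum_cells i) = UNIV"
proof -
  have "(\<Union>i. enum_cells i) = \<Union>P"
    using UN_disjointed_eq[of "from_nat_into P"] countable_P P_not_empty by simp
  also have "\<Union>P = UNIV"
    using cell_in_P mem_cell by blast
  finally show ?thesis .
qed

lemma cell_avg_on_enum_cells:
  assumes "x \<in> enum_cells i"
  shows "cell_avg M cell h x = (\<integral>y\<in>enum_cells i. h y \<partial>M) / measure M (enum_cells i)"
  unfolding cell_avg_def enum_cells_eq_cell[OF assms] ..

lemma integral_eq_suminf_enum_cells: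
  fixes g :: "'b \<Rightarrow> real"
  assumes "integrable M g"
  shows "(\<integral>x. g x \<partial>M) = (\<Sum>i. \<integral>x\<in>enum_cells i. g x \<partial>M)"
  using integral_eq_suminf_disjoint_family[OF assms UN_enum_cells sets_enum_cells]
    disjoint_family_disjointed by blast

lemma nn_integral_cell_avg_square_le:
  assumes h: "L2 M h"
  shows "(\<integral>\<^sup>+x\<in>enum_cells i. ennreal ((cell_avg M cell h x)\<^sup>2) \<partial>M)
    \<le> (\<integral>\<^sup>+x\<in>enum_cells i. ennreal ((h x)\<^sup>2) \<partial>M)"
proof -
  define B where "B = enum_cells i"
  define I where "I = (\<integral>y\<in>B. h y \<partial>M)"
  define m where "m = measure M B"
  define c where "c = I / m"
  have B: "B \<in> sets M" "emeasure M B < \<infinity>"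
    using sets_enum_cells finite_enum_cells by (auto simp: B_def)
  have "(\<integral>\<^sup>+x\<in>B. ennreal ((cell_avg M cell h x)\<^sup>2) \<partial>M)
      = (\<integral>\<^sup>+x. ennreal (c\<^sup>2) * indicator B x \<partial>M)"
    by (rule nn_integral_cong) (auto simp: indicator_def cell_avg_on_enum_cells B_def c_def I_def m_def)
  also have "\<dots> = ennreal (c\<^sup>2) * emeasure M B"
    using B by (simp add: nn_integral_cmult_indicator)
  also have "\<dots> = ennreal (c\<^sup>2 * m)"
    using emeasure_eq_ennreal_measure[of M B] B by (simp add: ennreal_mult m_def)
  also have "c\<^sup>2 * m = I\<^sup>2 / m"
    by (cases "m = 0") (simp_all add: c_def power2_eq_square)
  also have "I\<^sup>2 / m \<le> (\<integral>x\<in>B. (h x)\<^sup>2 \<partial>M)"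
    unfolding I_def m_def by (rule set_integral_square_div_measure_le[OF B h])
  also have "ennreal (\<integral>x\<in>B. (h x)\<^sup>2 \<partial>M) = (\<integral>\<^sup>+x. ennreal (indicator B x * (h x)\<^sup>2) \<partial>M)"
    using integrable_mult_indicator[OF B(1), of "\<lambda>x. (h x)\<^sup>2"] h
    by (simp add: L2_def set_lebesgue_integral_def nn_integral_eq_integral)
  also have "\<dots> = (\<integral>\<^sup>+x\<in>B. ennreal ((h x)\<^sup>2) \<partial>M)"
    by (rule nn_integral_cong) (simp add: indicator_def)
  finally show ?thesis
    by (simp add: B_def ennreal_leI)
qed

lemma L2_cell_avg:
  assumes h: "L2 M h"
  shows "L2 M (cell_avg M cell h)"
proof -
  have [measurable]: "h \<in> borel_measurable M" "cell_avg M cell h \<in> borel_measurable M"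
    using h borel_measurable_cell_avg by (auto simp: L2_def)
  have "(\<integral>\<^sup>+x. ennreal ((cell_avg M cell h x)\<^sup>2) \<partial>M)
      = (\<Sum>i. \<integral>\<^sup>+x\<in>enum_cells i. ennreal ((cell_avg M cell h x)\<^sup>2) \<partial>M)"
    using nn_integral_disjoint_family[OF _ sets_enum_cells disjoint_family_disjointed]
    by (simp add: UN_enum_cells)
  also have "\<dots> \<le> (\<Sum>i. \<integral>\<^sup>+x\<in>enum_cells i. ennreal ((h x)\<^sup>2) \<partial>M)"
    by (rule suminf_le[OF nn_integral_cell_avg_square_le[OF h] summableI summableI])
  also have "\<dots> = (\<integral>\<^sup>+x. ennreal ((h x)\<^sup>2) \<partial>M)"
    using nn_integral_disjoint_family[OF _ sets_enum_cells disjoint_family_disjointed]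
    by (simp add: UN_enum_cells)
  also have "\<dots> < \<infinity>"
    using h by (simp add: L2_def nn_integral_eq_integral)
  finally have "integrable M (\<lambda>x. (cell_avg M cell h x)\<^sup>2)"
    by (intro integrableI_bounded) simp_all
  then show ?thesis
    by (simp add: L2_def)
qed

lemma integral_cell_avg_mult:
  assumes h: "L2 M h" and f: "L2 M f"
  shows "(\<integral>x. cell_avg M cell h x * f x \<partial>M) = (\<integral>x. h x * cell_avg M cell f x \<partial>M)"
proof -
  have "(\<integral>x\<in>enum_cells i. cell_avg M cell h x * f x \<partial>M)
      = (\<integral>x\<in>enum_cells i. h x * cell_avg M cell f x \<partial>M)" for i
  proof -
    define m where "m = measure M (enum_cells i)"
    have "(\<integral>x\<in>enum_cells i. cell_avg M cell h x * f x \<partial>M)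
        = (\<integral>x\<in>enum_cells i. ((\<integral>y\<in>enum_cells i. h y \<partial>M) / m) * f x \<partial>M)"
      by (rule set_lebesgue_integral_cong) (auto simp: sets_enum_cells cell_avg_on_enum_cells m_def)
    also have "\<dots> = (\<integral>x\<in>enum_cells i. h x * ((\<integral>y\<in>enum_cells i. f y \<partial>M) / m) \<partial>M)"
      by simp
    also have "\<dots> = (\<integral>x\<in>enum_cells i. h x * cell_avg M cell f x \<partial>M)"
      by (rule set_lebesgue_integral_cong) (auto simp: sets_enum_cells cell_avg_on_enum_cells m_def)
    finally show ?thesis .
  qed
  then show ?thesis
    using integrable_mult_L2[OF L2_cell_avg[OF h] f] integrable_mult_L2[OF h L2_cell_avg[OF f]]
    by (simp add: integral_eq_suminf_enum_cells)
qed

lemma null_cells_null_sets: "(\<Union>B\<in>{B \<in> P. emeasure M B = 0}. B) \<in> null_sets M"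
  using countable_subset[OF _ countable_P] sets_P by (intro null_sets_UN') auto

end

section \<open>Kernels on product spaces\<close>

lemma (in pair_sigma_finite) integrable_tensor:
  fixes a b :: "_ \<Rightarrow> real"
  assumes a: "integrable M1 a" and b: "integrable M2 b"
  shows "integrable (M1 \<Otimes>\<^sub>M M2) (\<lambda>p. a (fst p) * b (snd p))"
proof (rule Fubini_integrable)
  have [measurable]: "a \<in> borel_measurable M1" "b \<in> borel_measurable M2"
    using a b by auto
  show "(\<lambda>p. a (fst p) * b (snd p)) \<in> borel_measurable (M1 \<Otimes>\<^sub>M M2)"
    by measurable
  have "integrable M1 (\<lambda>x. \<bar>a x\<bar> * (\<integral>y. \<bar>b y\<bar> \<partial>M2))"
    using a by (intro integrable_mult_left) auto
  then show "integrable M1 (\<lambda>x. \<integral>y. norm (a (fst (x, y)) * b (snd (x, y))) \<partial>M2)"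
    by (simp add: abs_mult)
  show "AE x in M1. integrable M2 (\<lambda>y. a (fst (x, y)) * b (snd (x, y)))"
    using b by auto
qed

lemma (in pair_sigma_finite) integral_tensor:
  fixes a b :: "_ \<Rightarrow> real"
  assumes "integrable M1 a" "integrable M2 b"
  shows "(\<integral>p. a (fst p) * b (snd p) \<partial>(M1 \<Otimes>\<^sub>M M2)) = (\<integral>x. a x \<partial>M1) * (\<integral>y. b y \<partial>M2)"
  using integral_fst'[OF integrable_tensor[OF assms]] by simp

lemma L2_tensor:
  assumes "sigma_finite_measure M" "L2 M f" "L2 M g"
  shows "L2 (M \<Otimes>\<^sub>M M) (\<lambda>p. f (fst p) * g (snd p))"
proof -
  interpret pair_sigma_finite M M
    using assms(1) by (simp add: pair_sigma_finite_def)
  have [measurable]: "f \<in> borel_measurable M" "g \<in> borel_measurable M"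
    using assms by (simp_all add: L2_def)
  have "integrable (M \<Otimes>\<^sub>M M) (\<lambda>p. (f (fst p))\<^sup>2 * (g (snd p))\<^sup>2)"
    using assms by (intro integrable_tensor) (simp_all add: L2_def)
  then show ?thesis
    by (simp add: L2_def power_mult_distrib)
qed

lemma (in pair_sigma_finite) set_integral_Times:
  fixes G :: "_ \<Rightarrow> real"
  assumes "integrable (M1 \<Otimes>\<^sub>M M2) (\<lambda>p. indicator (B \<times> C) p * G p)"
  shows "(\<integral>p\<in>B \<times> C. G p \<partial>(M1 \<Otimes>\<^sub>M M2)) = (\<integral>x\<in>B. (\<integral>y\<in>C. G (x, y) \<partial>M2) \<partial>M1)"
proof -
  have "(\<integral>p\<in>B \<times> C. G p \<partial>(M1 \<Otimes>\<^sub>M M2))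
      = (\<integral>x. (\<integral>y. indicator (B \<times> C) (x, y) * G (x, y) \<partial>M2) \<partial>M1)"
    using integral_fst'[OF assms] by (simp add: set_lebesgue_integral_def)
  also have "\<dots> = (\<integral>x. indicator B x * (\<integral>y. indicator C y * G (x, y) \<partial>M2) \<partial>M1)"
    by (simp add: indicator_times mult.assoc)
  finally show ?thesis
    by (simp add: set_lebesgue_integral_def)
qed

lemma measure_pair_measure_Times:
  assumes "sigma_finite_measure M2" "A \<in> sets M1" "B \<in> sets M2"
  shows "measure (M1 \<Otimes>\<^sub>M M2) (A \<times> B) = measure M1 A * measure M2 B"
  using assms sigma_finite_measure.emeasure_pair_measure_Times[OF assms]
  by (simp add: measure_def enn2real_mult)

lemma quadratic_form_eq_integral_tensor:
  assumes sf: "sigma_finite_measure M"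
    and H: "L2 (M \<Otimes>\<^sub>M M) (\<lambda>p. H (fst p) (snd p))" and f: "L2 M f"
  shows "(\<integral>x. (\<integral>y. H x y * f y \<partial>M) * f x \<partial>M)
    = (\<integral>p. H (fst p) (snd p) * (f (fst p) * f (snd p)) \<partial>(M \<Otimes>\<^sub>M M))"
proof -
  interpret pair_sigma_finite M M
    using sf by (simp add: pair_sigma_finite_def)
  have "(\<integral>x. (\<integral>y. H x y * f y \<partial>M) * f x \<partial>M) = (\<integral>x. (\<integral>y. H x y * (f x * f y) \<partial>M) \<partial>M)"
    by (simp add: mult_ac)
  also have "\<dots> = (\<integral>p. H (fst p) (snd p) * (f (fst p) * f (snd p)) \<partial>(M \<Otimes>\<^sub>M M))"
    using integral_fst'[OF integrable_mult_L2[OF H L2_tensor[OF sf f f]]] by simp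
  finally show ?thesis .
qed

lemma L2_pos_def_cong_AE:
  assumes sf: "sigma_finite_measure M" and K: "L2_pos_def M K"
    and meas: "(\<lambda>(x, y). H x y) \<in> borel_measurable (M \<Otimes>\<^sub>M M)"
    and AE_eq: "AE p in M \<Otimes>\<^sub>M M. H (fst p) (snd p) = K (fst p) (snd p)"
  shows "L2_pos_def M H"
proof -
  have K_L2: "L2 (M \<Otimes>\<^sub>M M) (\<lambda>p. K (fst p) (snd p))"
    using K by (simp add: L2_pos_def_def split_beta')
  have H_meas: "(\<lambda>p. H (fst p) (snd p)) \<in> borel_measurable (M \<Otimes>\<^sub>M M)"
    using meas by (simp add: split_beta')
  have "integrable (M \<Otimes>\<^sub>M M) (\<lambda>p. (H (fst p) (snd p))\<^sup>2)"
  proof (rule integrable_cong_AE_imp)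
    show "integrable (M \<Otimes>\<^sub>M M) (\<lambda>p. (K (fst p) (snd p))\<^sup>2)"
      using K_L2 by (simp add: L2_def)
    show "(\<lambda>p. (H (fst p) (snd p))\<^sup>2) \<in> borel_measurable (M \<Otimes>\<^sub>M M)"
      by (intro borel_measurable_power H_meas)
    show "AE p in M \<Otimes>\<^sub>M M. (K (fst p) (snd p))\<^sup>2 = (H (fst p) (snd p))\<^sup>2"
      using AE_eq by eventually_elim simp
  qed
  with H_meas have H_L2: "L2 (M \<Otimes>\<^sub>M M) (\<lambda>p. H (fst p) (snd p))"
    by (simp add: L2_def)
  have "(\<integral>x. (\<integral>y. H x y * f y \<partial>M) * f x \<partial>M) = (\<integral>x. (\<integral>y. K x y * f y \<partial>M) * f x \<partial>M)"
    if f: "L2 M f" for f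
    unfolding quadratic_form_eq_integral_tensor[OF sf H_L2 f] quadratic_form_eq_integral_tensor[OF sf K_L2 f]
    using H_L2 K_L2 L2_tensor[OF sf f f] AE_eq
    by (intro integral_cong_AE) (auto simp: L2_def)
  with H_L2 K show ?thesis
    by (simp add: L2_pos_def_def split_beta')
qed

lemma AE_pair_measure_not_in_null:
  assumes "sigma_finite_measure M" "N \<in> null_sets M"
  shows "AE p in M \<Otimes>\<^sub>M M. fst p \<notin> N \<and> snd p \<notin> N"
proof (rule AE_I')
  interpret sigma_finite_measure M
    by (fact assms(1))
  have "N \<times> space M \<in> null_sets (M \<Otimes>\<^sub>M M)" "space M \<times> N \<in> null_sets (M \<Otimes>\<^sub>M M)"
    using assms(2) by auto
  then show "N \<times> space M \<union> space M \<times> N \<in> null_sets (M \<Otimes>\<^sub>M M)"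
    by blast
  show "{p \<in> space (M \<Otimes>\<^sub>M M). \<not> (fst p \<notin> N \<and> snd p \<notin> N)} \<subseteq> N \<times> space M \<union> space M \<times> N"
    by (auto simp: space_pair_measure)
qed

context countable_partition
begin

abbreviation pair_cell :: "'b \<times> 'b \<Rightarrow> ('b \<times> 'b) set" where
  "pair_cell p \<equiv> cell (fst p) \<times> cell (snd p)"

lemma countable_partition_pair:
  assumes "sigma_finite_measure M"
  shows "countable_partition (M \<Otimes>\<^sub>M M) ((\<lambda>(B, C). B \<times> C) ` (P \<times> P)) pair_cell"
proof
  interpret sigma_finite_measure M
    by (fact assms)
  show "emeasure (M \<Otimes>\<^sub>M M) Q < \<infinity>" if "Q \<in> (\<lambda>(B, C). B \<times> C) ` (P \<times> P)" for Q
    using that sets_P finite_P by (auto simp: emeasure_pair_measure_Times ennreal_mult_less_top)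
  show "pair_cell p = Q" if "Q \<in> (\<lambda>(B, C). B \<times> C) ` (P \<times> P)" "p \<in> Q" for Q p
    using that cell_unique by (cases p) auto
qed (use space_eq countable_P sets_P cell_in_P mem_cell in \<open>auto simp: space_pair_measure\<close>)

lemma cell_avg_tensor:
  assumes sf: "sigma_finite_measure M" and f: "L2 M f" and g: "L2 M g"
  shows "cell_avg (M \<Otimes>\<^sub>M M) pair_cell (\<lambda>p. f (fst p) * g (snd p)) q
    = cell_avg M cell f (fst q) * cell_avg M cell g (snd q)"
proof -
  interpret pair_sigma_finite M M
    using sf by (simp add: pair_sigma_finite_def)
  define B C where "B = cell (fst q)" and "C = cell (snd q)"
  have B: "B \<in> sets M" "emeasure M B < \<infinity>" and C: "C \<in> sets M" "emeasure M C < \<infinity>"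
    using sets_P finite_P cell_in_P by (auto simp: B_def C_def)
  have "(\<integral>p\<in>B \<times> C. f (fst p) * g (snd p) \<partial>(M \<Otimes>\<^sub>M M))
      = (\<integral>p. (indicator B (fst p) * f (fst p)) * (indicator C (snd p) * g (snd p)) \<partial>(M \<Otimes>\<^sub>M M))"
    unfolding set_lebesgue_integral_def by (intro Bochner_Integration.integral_cong) (auto simp: indicator_def)
  also have "\<dots> = (\<integral>x\<in>B. f x \<partial>M) * (\<integral>y\<in>C. g y \<partial>M)"
    using integral_tensor[OF integrable_indicator_mult_L2[OF B f] integrable_indicator_mult_L2[OF C g]]
    by (simp add: set_lebesgue_integral_def)
  finally show ?thesis
    using measure_pair_measure_Times[OF sf B(1) C(1)] by (simp add: cell_avg_def B_def C_def)
qed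

lemma cell_avg_pair_cell:
  assumes sf: "sigma_finite_measure M" and K: "L2 (M \<Otimes>\<^sub>M M) (\<lambda>p. K (fst p) (snd p))"
  shows "cell_avg (M \<Otimes>\<^sub>M M) pair_cell (\<lambda>p. K (fst p) (snd p)) (u, v)
    = (1 / (measure M (cell u) * measure M (cell v))) * (\<integral>x\<in>cell u. (\<integral>y\<in>cell v. K x y \<partial>M) \<partial>M)"
proof -
  interpret pair_sigma_finite M M
    using sf by (simp add: pair_sigma_finite_def)
  interpret pair: countable_partition "M \<Otimes>\<^sub>M M" "(\<lambda>(B, C). B \<times> C) ` (P \<times> P)" pair_cell
    by (fact countable_partition_pair[OF sf])
  have "integrable (M \<Otimes>\<^sub>M M) (\<lambda>p. indicator (pair_cell (u, v)) p * K (fst p) (snd p))"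
    using pair.sets_P pair.finite_P pair.cell_in_P by (intro integrable_indicator_mult_L2 K) auto
  from set_integral_Times[OF this] show ?thesis
    using measure_pair_measure_Times[OF sf sets_P[OF cell_in_P] sets_P[OF cell_in_P]]
    by (simp add: cell_avg_def)
qed

lemma L2_pos_def_cell_avg:
  assumes sf: "sigma_finite_measure M" and K_pd: "L2_pos_def M K"
  shows "L2_pos_def M (\<lambda>u v. cell_avg (M \<Otimes>\<^sub>M M) pair_cell (\<lambda>p. K (fst p) (snd p)) (u, v))"
proof -
  interpret pair: countable_partition "M \<Otimes>\<^sub>M M" "(\<lambda>(B, C). B \<times> C) ` (P \<times> P)" pair_cell
    by (fact countable_partition_pair[OF sf])
  define K2 where "K2 = (\<lambda>p. K (fst p) (snd p))"
  have K2: "L2 (M \<Otimes>\<^sub>M M) K2"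
    using K_pd by (simp add: L2_pos_def_def K2_def split_beta')
  have avg_K2: "L2 (M \<Otimes>\<^sub>M M) (cell_avg (M \<Otimes>\<^sub>M M) pair_cell K2)"
    by (fact pair.L2_cell_avg[OF K2])
  have "0 \<le> (\<integral>x. (\<integral>y. cell_avg (M \<Otimes>\<^sub>M M) pair_cell K2 (x, y) * f y \<partial>M) * f x \<partial>M)"
    if f: "L2 M f" for f
  proof -
    define g where "g = cell_avg M cell f"
    have g: "L2 M g"
      unfolding g_def by (fact L2_cell_avg[OF f])
    have "(\<integral>x. (\<integral>y. cell_avg (M \<Otimes>\<^sub>M M) pair_cell K2 (x, y) * f y \<partial>M) * f x \<partial>M)
        = (\<integral>p. cell_avg (M \<Otimes>\<^sub>M M) pair_cell K2 p * (f (fst p) * f (snd p)) \<partial>(M \<Otimes>\<^sub>M M))"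
      using quadratic_form_eq_integral_tensor[OF sf _ f, of "\<lambda>x y. cell_avg (M \<Otimes>\<^sub>M M) pair_cell K2 (x, y)"]
        avg_K2 by simp
    also have "\<dots> = (\<integral>p. K2 p * (g (fst p) * g (snd p)) \<partial>(M \<Otimes>\<^sub>M M))"
      using pair.integral_cell_avg_mult[OF K2 L2_tensor[OF sf f f]] cell_avg_tensor[OF sf f f]
      by (simp add: g_def)
    also have "\<dots> = (\<integral>x. (\<integral>y. K x y * g y \<partial>M) * g x \<partial>M)"
      using quadratic_form_eq_integral_tensor[OF sf _ g, of K] K2 by (simp add: K2_def)
    also have "\<dots> \<ge> 0"
      using K_pd g by (simp add: L2_pos_def_def)
    finally show ?thesis .
  qed
  with avg_K2 show ?thesis
    by (simp add: L2_pos_def_def K2_def split_beta')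
qed

end

section \<open>The partitions P_n\<close>

lemma closure_UN_lessThan:
  fixes k :: nat
  shows "closure (\<Union>j<k. A j) = (\<Union>j<k. closure (A j))"
  by (induction k) (simp_all add: lessThan_Suc)

lemma countable_Part: "countable (Part A U n)"
  by (induction n) (auto simp: P0_def)

lemma Part_subset_closure: "B \<in> Part A U n \<Longrightarrow> \<exists>k. B \<subseteq> closure (A k)"
proof (induction n arbitrary: B)
  case 0
  then show ?case
    by (auto simp: P0_def frontier_def dest: closure_subset[THEN subsetD])
next
  case (Suc n)
  then obtain B' where "B' \<in> Part A U n" "B \<subseteq> B'"
    by auto
  then show ?case
    using Suc.IH by blast
qed

context
  fixes A U :: "nat \<Rightarrow> 'a::topological_space set"
  assumes open_A: "\<And>k. open (A k)" and open_U: "\<And>m. open (U m)"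
begin

lemma Part_sets_borel: "B \<in> Part A U n \<Longrightarrow> B \<in> sets borel"
proof (induction n arbitrary: B)
  case 0
  then show ?case
    using open_A by (auto simp: P0_def)
next
  case (Suc n)
  then obtain C W where "C \<in> Part A U n" "W \<in> {U n, UNIV - closure (U n), frontier (U n)}" "B = W \<inter> C"
    by auto
  then show ?case
    using Suc.IH open_U[of n] by auto
qed

text \<open>
  A point of a cell of P_0 of index k lies in the closure of A_k but in none of the closures
  of A_0, ..., A_(k-1), so the index is determined by the point.
\<close>

lemma P0_unique:
  assumes "B1 \<in> P0 A" "B2 \<in> P0 A" "x \<in> B1" "x \<in> B2"
  shows "B1 = B2"
proof -
  define cell0 where "cell0 k = {A k - closure (\<Union>j<k. A j), frontier (A k) - closure (\<Union>j<k. A j)}" for k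
  obtain k1 k2 where k: "B1 \<in> cell0 k1" "B2 \<in> cell0 k2"
    using assms(1,2) by (auto simp: P0_def cell0_def)
  have in_closure: "x \<in> closure (A k)" if "B \<in> cell0 k" "x \<in> B" for B k
    using that closure_subset by (auto simp: cell0_def frontier_def)
  have notin_closure: "x \<notin> closure (A j)" if "j < k" "B \<in> cell0 k" "x \<in> B" for B k j
    using that by (auto simp: cell0_def closure_UN_lessThan)
  have "k1 = k2"
  proof (rule ccontr)
    assume "k1 \<noteq> k2"
    then consider "k1 < k2" | "k2 < k1"
      by linarith
    then show False
      using in_closure[OF k(1) assms(3)] in_closure[OF k(2) assms(4)]
        notin_closure[OF _ k(1) assms(3)] notin_closure[OF _ k(2) assms(4)]
      by cases blast+
  qed
  moreover have "A k \<inter> frontier (A k) = {}" for k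
    using open_A[of k] by (auto simp: frontier_def interior_open)
  ultimately show ?thesis
    using k assms(3,4) by (auto simp: cell0_def)
qed

lemma Part_unique: "B1 \<in> Part A U n \<Longrightarrow> B2 \<in> Part A U n \<Longrightarrow> x \<in> B1 \<Longrightarrow> x \<in> B2 \<Longrightarrow> B1 = B2"
proof (induction n arbitrary: B1 B2)
  case 0
  then show ?case
    using P0_unique by simp
next
  case (Suc n)
  obtain C1 W1 where C1: "C1 \<in> Part A U n" "W1 \<in> {U n, UNIV - closure (U n), frontier (U n)}" "B1 = W1 \<inter> C1"
    using Suc.prems(1) by auto
  obtain C2 W2 where C2: "C2 \<in> Part A U n" "W2 \<in> {U n, UNIV - closure (U n), frontier (U n)}" "B2 = W2 \<inter> C2"
    using Suc.prems(2) by auto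
  have "C1 = C2"
    using Suc.IH[OF C1(1) C2(1)] C1(3) C2(3) Suc.prems(3,4) by blast
  moreover have "W1 = W2"
    using C1(2,3) C2(2,3) Suc.prems(3,4) open_U[of n] closure_subset[of "U n"]
    by (auto simp: frontier_def interior_open)
  ultimately show ?case
    using C1(3) C2(3) by simp
qed

lemma Part_covers:
  assumes cover: "(\<Union>k. A k) = UNIV"
  shows "\<exists>B\<in>Part A U n. x \<in> B"
proof (induction n)
  case 0
  have "\<exists>k. x \<in> closure (A k)"
    using cover closure_subset by blast
  define k where "k = (LEAST k. x \<in> closure (A k))"
  have k: "x \<in> closure (A k)"
    unfolding k_def by (rule LeastI_ex) fact
  have "x \<notin> closure (A j)" if "j < k" for j
    using that not_less_Least unfolding k_def by blast
  then have "x \<notin> closure (\<Union>j<k. A j)"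
    by (simp add: closure_UN_lessThan)
  moreover have "x \<in> A k \<or> x \<in> frontier (A k)"
    using k open_A by (auto simp: frontier_def interior_open)
  ultimately show ?case
    unfolding Part.simps P0_def by blast
next
  case (Suc n)
  then obtain C where "C \<in> Part A U n" "x \<in> C"
    by blast
  moreover have "x \<in> U n \<or> x \<in> UNIV - closure (U n) \<or> x \<in> frontier (U n)"
    using open_U[of n] by (auto simp: frontier_def interior_open)
  ultimately show ?case
    by auto
qed

lemma Cell_in_Part:
  assumes "(\<Union>k. A k) = UNIV"
  shows "Cell A U n x \<in> Part A U n \<and> x \<in> Cell A U n x"
proof -
  have "\<exists>!B. B \<in> Part A U n \<and> x \<in> B"
    using Part_covers[OF assms] Part_unique by blast
  then show ?thesis
    unfolding Cell_def by (rule theI')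
qed

end

lemma emeasure_compact_finite:
  fixes C :: "'a::t2_space set"
  assumes borel: "sets M = sets borel"
    and loc_fin: "\<And>x. \<exists>V. open V \<and> x \<in> V \<and> emeasure M V < \<infinity>"
    and C: "compact C"
  shows "emeasure M C < \<infinity>"
proof -
  obtain V where V: "\<And>x. open (V x)" "\<And>x. x \<in> V x" "\<And>x. emeasure M (V x) < \<infinity>"
    using loc_fin by metis
  have "C \<subseteq> (\<Union>c\<in>C. V c)"
    using V(2) by blast
  then obtain C' where C': "C' \<subseteq> C" "finite C'" "C \<subseteq> (\<Union>c\<in>C'. V c)"
    using compactE_image[OF C, of C V] V(1) by metis
  have sets_V: "V c \<in> sets M" for c
    using V(1) borel by simp
  have "C \<in> sets M"
    using borel compact_imp_closed[OF C] by simp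
  then have "emeasure M C \<le> emeasure M (\<Union>c\<in>C'. V c)"
    using C'(2,3) sets_V by (intro emeasure_mono) auto
  also have "\<dots> \<le> (\<Sum>c\<in>C'. emeasure M (V c))"
    using C'(2) sets_V by (intro emeasure_subadditive_finite) auto
  also have "\<dots> < \<infinity>"
    using C'(2) V(3) by simp
  finally show ?thesis .
qed

lemma countable_partition_Part:
  fixes M :: "'a::t2_space measure"
  assumes borel: "sets M = sets borel"
    and loc_fin: "\<And>x. \<exists>V. open V \<and> x \<in> V \<and> emeasure M V < \<infinity>"
    and cover_int: "\<And>k. \<exists>C. compact C \<and> A k = interior C"
    and cover: "(\<Union>k. A k) = UNIV"
    and open_U: "\<And>m. open (U m)"
  shows "countable_partition M (Part A U n) (Cell A U n)"
proof
  have open_A: "\<And>k. open (A k)"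
    using cover_int by (metis open_interior)
  note Cell = Cell_in_Part[of A U, OF open_A open_U cover]
  show "space M = UNIV"
    using sets_eq_imp_space_eq[OF borel] by simp
  show "countable (Part A U n)"
    by (fact countable_Part)
  show "Cell A U n x \<in> Part A U n" "x \<in> Cell A U n x" for x
    using Cell by blast+
  show "Cell A U n x = B" if "B \<in> Part A U n" "x \<in> B" for B x
    using Cell Part_unique[of A U, OF open_A open_U] that by blast
  show "B \<in> sets M" if "B \<in> Part A U n" for B
    using Part_sets_borel[of A U, OF open_A open_U that] borel by simp
  show "emeasure M B < \<infinity>" if B: "B \<in> Part A U n" for B
  proof -
    obtain k where k: "B \<subseteq> closure (A k)"
      using Part_subset_closure[OF B] by blast
    obtain C where C: "compact C" "A k = interior C"
      using cover_int by blast
    have "B \<subseteq> C"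
      using k C closure_mono[OF interior_subset[of C]] closure_closed[OF compact_imp_closed[OF C(1)]]
      by simp
    then have "emeasure M B \<le> emeasure M C"
      using borel compact_imp_closed[OF C(1)] by (intro emeasure_mono) auto
    also have "\<dots> < \<infinity>"
      by (rule emeasure_compact_finite[OF borel loc_fin C(1)])
    finally show ?thesis .
  qed
qed

lemma Nset_null_sets:
  assumes partition: "\<And>m. countable_partition M (Part A U m) (Cell A U m)"
  shows "Nset M A U \<in> null_sets M"
proof -
  have "Nset M A U = (\<Union>m. \<Union>B\<in>{B \<in> Part A U m. emeasure M B = 0}. B)"
  proof (intro equalityI subsetI)
    fix x assume "x \<in> Nset M A U"
    then obtain m where "emeasure M (Cell A U m x) = 0"
      by (auto simp: Nset_def)
    moreover have "Cell A U m x \<in> Part A U m" "x \<in> Cell A U m x"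
      using countable_partition.cell_in_P[OF partition] countable_partition.mem_cell[OF partition] .
    ultimately show "x \<in> (\<Union>m. \<Union>B\<in>{B \<in> Part A U m. emeasure M B = 0}. B)"
      by blast
  next
    fix x assume "x \<in> (\<Union>m. \<Union>B\<in>{B \<in> Part A U m. emeasure M B = 0}. B)"
    then obtain m B where "B \<in> Part A U m" "emeasure M B = 0" "x \<in> B"
      by blast
    then have "emeasure M (Cell A U m x) = 0"
      using countable_partition.cell_unique[OF partition] by simp
    then show "x \<in> Nset M A U"
      unfolding Nset_def by blast
  qed
  also have "\<dots> \<in> null_sets M"
    by (intro null_sets_UN countable_partition.null_cells_null_sets[OF partition])
  finally show ?thesis .
qed

theorem theorem3p10:
  fixes M :: "'a::{t2_space, second_countable_topology} measure"
    and A U :: "nat \<Rightarrow> 'a set"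
    and K :: "'a \<Rightarrow> 'a \<Rightarrow> real"
    and n :: nat
  assumes loc_compact: "locally_compact_space (euclidean :: 'a topology)"
    and borel: "sets M = sets borel"
    and nondeg: "\<And>V. open V \<Longrightarrow> V \<noteq> {} \<Longrightarrow> emeasure M V > 0"
    and sigma_fin: "sigma_finite_measure M"
    and loc_fin: "\<And>x. \<exists>V. open V \<and> x \<in> V \<and> emeasure M V < \<infinity>"
    and cover_int: "\<And>k. \<exists>C. compact C \<and> A k = interior C"
    and cover_fin: "\<And>k. emeasure M (A k) < \<infinity>"
    and cover: "(\<Union>k. A k) = UNIV"
    and base: "topological_basis (range U)"
    and K_pd: "L2_pos_def M K"
    and n: "n \<ge> 1"
  shows "L2_pos_def M (En M A U n K)"
proof -
  have open_U: "open (U m)" for m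
    using base topological_basis_open by blast
  interpret countable_partition M "Part A U n" "Cell A U n"
    by (rule countable_partition_Part[OF borel loc_fin cover_int cover open_U])
  define K2 where "K2 = (\<lambda>p. K (fst p) (snd p))"
  define N where "N = Nset M A U"
  have N: "N \<in> null_sets M"
    unfolding N_def by (rule Nset_null_sets[OF countable_partition_Part[OF borel loc_fin cover_int cover open_U]])
  have K2: "L2 (M \<Otimes>\<^sub>M M) K2"
    using K_pd by (simp add: L2_pos_def_def K2_def split_beta')
  have En_eq: "En M A U n K u v = (if u \<in> N \<or> v \<in> N then 0 else cell_avg (M \<Otimes>\<^sub>M M) pair_cell K2 (u, v))"
    for u v
    using cell_avg_pair_cell[OF sigma_fin K2[unfolded K2_def]] by (simp add: En_def N_def K2_def)
  have [measurable]: "N \<in> sets M" "cell_avg (M \<Otimes>\<^sub>M M) pair_cell K2 \<in> borel_measurable (M \<Otimes>\<^sub>M M)"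
    using N countable_partition.borel_measurable_cell_avg[OF countable_partition_pair[OF sigma_fin]]
    by auto
  have "(\<lambda>(u, v). En M A U n K u v) \<in> borel_measurable (M \<Otimes>\<^sub>M M)"
    unfolding En_eq split_beta' by measurable
  moreover have "AE p in M \<Otimes>\<^sub>M M. En M A U n K (fst p) (snd p) = cell_avg (M \<Otimes>\<^sub>M M) pair_cell K2 (fst p, snd p)"
    using AE_pair_measure_not_in_null[OF sigma_fin N] by eventually_elim (simp add: En_eq)
  ultimately show ?thesis
    by (rule L2_pos_def_cong_AE[OF sigma_fin L2_pos_def_cell_avg[OF sigma_fin K_pd, folded K2_def]])
qed

end
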